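(* For any $\rho$, any value $h_\rho$ of $H_\rho(X)$, and any $\sigma_\varepsilon^2$, the plausibility function satisfies \[ P_{X|\rho, \sigma_\varepsilon^2}\bigl\{ \mathrm{pl}_{X|h_\rho, \rho}(\rho) \leq \alpha \mid H_\rho(X)=h_\rho \bigr\} = \alpha, \quad \forall \; \alpha \in (0,1). \]
   Context: Consider the linear mixed model $Y = X\beta + Z\alpha + \varepsilon$ with $\alpha \sim N_a(0,\sigma_\alpha^2 A)$, $\varepsilon \sim N_n(0,\sigma_\varepsilon^2 I_n)$ independent, $A$ known, $X$ of rank $p<n$. Let $K$ be $n\times(n-p)$ with $KK^\top = I_n - X(X^\top X)^{-1}X^\top$, $K^\top K = I_{n-p}$, and $G = K^\top Z A Z^\top K$ with distinct eigenvalues $\lambda_1 > \cdots > \lambda_L \geq 0$ of multiplicities $r_1,\ldots,r_L$ (assume $L\ge 3$). With $P=[P_1,\ldots,P_L]$ orthogonal diagonalizing $G$, let $S_\ell = Y^\top K P_\ell P_\ell^\top K^\top Y$, so that $S_\ell = (\lambda_\ell\sigma_\alpha^2+\sigma_\varepsilon^2)V_\ell$ with $V_\ell \sim \chi^2(r_\ell)$ independent. The heritability coefficient is $\rho = \sigma_\alpha^2/(\sigma_\alpha^2+\sigma_\varepsilon^2)$. Define $X_\ell = (S_\ell/r_\ell)/(S_L/r_L)$ and $U_\ell = (V_\ell/r_\ell)/(V_L/r_L)$ for $\ell=1,\ldots,L-1$, and $f_\ell(\rho) = \{1+\rho(\lambda_\ell-1)\}/\{1+\rho(\lambda_L-1)\}$,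 so that $X_\ell = f_\ell(\rho)U_\ell$. Let $g(\rho) = (\partial_\rho \log f_1(\rho),\ldots,\partial_\rho\log f_{L-1}(\rho))^\top$ and let $M_\rho$ be an $(L-2)\times(L-1)$ matrix whose rows form a basis of the orthogonal complement of $g(\rho)$. Define $\tau(u)=\sum_{\ell=1}^{L-1}\log u_\ell$, $\eta_\rho(u) = M_\rho(\log u_1,\ldots,\log u_{L-1})^\top$, $T(x)=\sum_{\ell=1}^{L-1}\log x_\ell$, $H_\rho(x) = M_\rho(\log\{x_1/f_1(\rho)\},\ldots,\log\{x_{L-1}/f_{L-1}(\rho)\})^\top$, and $\phi(\rho)=\sum_{\ell=1}^{L-1}\log f_\ell(\rho)$. This gives the conditional association $T(X) = \phi(\rho) + V$, where $V \sim P_{V|h_\rho,\rho}$, the conditional distribution of $\tau(U)$ given $\eta_\rho(U) = h_\rho$, the observed value of $H_\rho(X)$. Use the default predictive random set $\mathcal{S} = \{v : |v-\mu_\rho| \le |V-\mu_\rho|\}$ with $V\sim P_{V|h_\rho,\rho}$ and $\mu_\rho$ the mean of $P_{V|h_\rho,\rho}$. Let $F_{h_\rho,\rho}$ be the distribution function of $|V-\mu_\rho|$ for $V \sim P_{V|h_\rho,\rho}$. The plausibility function is $\mathrm{pl}_{x|h_\rho,\rho}(\rho) = 1 - F_{h_\rho,\rho}(|T(x)-\phi(\rho)-\mu_\rho|)$. $P_{X|\rho,\sigma_\varepsilon^2}$ denotes the sampling distribution of $X=(X_1,\ldots,X_{L-1})$ under $(\rho,\sigma_\varepsilon^2)$.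 *)

theory Defs
  imports "HOL-Probability.Probability"
begin

text \<open>Indices are 0-based: the paper's \<open>\<ell> = 1..L\<close> becomes \<open>l = 0..L-1\<close>, the
  last index \<open>L\<close> becomes \<open>L - 1\<close>; vectors of length \<open>L-1\<close> / \<open>L-2\<close> are functions
  \<open>nat \<Rightarrow> real\<close> used on \<open>{..<L-1}\<close> / \<open>{..<L-2}\<close>.\<close>

definition chi2_density :: "nat \<Rightarrow> real \<Rightarrow> real" where
  "chi2_density r x =
     (if x > 0 then x powr (real r / 2 - 1) * exp (- x / 2) / (2 powr (real r / 2) * Gamma (real r / 2))
      else 0)"

definition herit :: "real \<Rightarrow> real \<Rightarrow> real" where
  "herit sa se = sa / (sa + se)"

definition fl :: "(nat \<Rightarrow> real) \<Rightarrow> nat \<Rightarrow> nat \<Rightarrow> real \<Rightarrow> real" where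
  "fl lam L l \<rho> = (1 + \<rho> * (lam l - 1)) / (1 + \<rho> * (lam (L - 1) - 1))"

definition gvec :: "(nat \<Rightarrow> real) \<Rightarrow> nat \<Rightarrow> real \<Rightarrow> nat \<Rightarrow> real" where
  "gvec lam L \<rho> l = deriv (\<lambda>t. ln (fl lam L l t)) \<rho>"

definition rows_basis_orth_compl :: "nat \<Rightarrow> (nat \<Rightarrow> nat \<Rightarrow> real) \<Rightarrow> (nat \<Rightarrow> real) \<Rightarrow> bool" where
  "rows_basis_orth_compl L M g \<longleftrightarrow>
     (\<forall>i<L - 2. (\<Sum>l<L - 1. M i l * g l) = 0) \<and>
     (\<forall>c. (\<forall>l<L - 1. (\<Sum>i<L - 2. c i * M i l) = 0) \<longrightarrow> (\<forall>i<L - 2. c i = 0)) \<and>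
     (\<forall>v. (\<Sum>l<L - 1. v l * g l) = 0 \<longrightarrow>
          (\<exists>c. \<forall>l<L - 1. v l = (\<Sum>i<L - 2. c i * M i l)))"

definition Hspace :: "nat \<Rightarrow> (nat \<Rightarrow> real) measure" where
  "Hspace L = PiM {..<L - 2} (\<lambda>_. borel)"

definition tau :: "nat \<Rightarrow> (nat \<Rightarrow> real) \<Rightarrow> real" where
  "tau L u = (\<Sum>l<L - 1. ln (u l))"

definition eta :: "nat \<Rightarrow> (nat \<Rightarrow> nat \<Rightarrow> real) \<Rightarrow> (nat \<Rightarrow> real) \<Rightarrow> nat \<Rightarrow> real" where
  "eta L M u = restrict (\<lambda>i. \<Sum>l<L - 1. M i l * ln (u l)) {..<L - 2}"

definition Tstat :: "nat \<Rightarrow> (nat \<Rightarrow> real) \<Rightarrow> real" where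
  "Tstat L x = (\<Sum>l<L - 1. ln (x l))"

definition Hstat :: "(nat \<Rightarrow> real) \<Rightarrow> nat \<Rightarrow> (nat \<Rightarrow> nat \<Rightarrow> real) \<Rightarrow> real \<Rightarrow> (nat \<Rightarrow> real) \<Rightarrow> nat \<Rightarrow> real" where
  "Hstat lam L M \<rho> x = restrict (\<lambda>i. \<Sum>l<L - 1. M i l * ln (x l / fl lam L l \<rho>)) {..<L - 2}"

definition phi :: "(nat \<Rightarrow> real) \<Rightarrow> nat \<Rightarrow> real \<Rightarrow> real" where
  "phi lam L \<rho> = (\<Sum>l<L - 1. ln (fl lam L l \<rho>))"

text \<open>K is a regular conditional distribution of the real random variable Y given
  the random element Z (with values in N): a probability kernel with
  \<open>P(Y \<in> B, Z \<in> C) = \<integral>_C K z B dP_Z(z)\<close>.\<close>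
definition cond_distr_kernel ::
  "'a measure \<Rightarrow> ('a \<Rightarrow> real) \<Rightarrow> ('a \<Rightarrow> 'b) \<Rightarrow> 'b measure \<Rightarrow> ('b \<Rightarrow> real measure) \<Rightarrow> bool" where
  "cond_distr_kernel M Y Z N K \<longleftrightarrow>
     (\<forall>z\<in>space N. prob_space (K z) \<and> sets (K z) = sets borel) \<and>
     (\<forall>B\<in>sets borel. (\<lambda>z. emeasure (K z) B) \<in> borel_measurable N) \<and>
     (\<forall>B\<in>sets borel. \<forall>C\<in>sets N.
        emeasure M {\<omega>\<in>space M. Y \<omega> \<in> B \<and> Z \<omega> \<in> C}
          = (\<integral>\<^sup>+ z. indicator C z * emeasure (K z) B \<partial>(distr M N Z)))"

text \<open>Mean \<open>\<mu>_\<rho>\<close> of \<open>P_{V|h,\<rho>}\<close> and distribution function \<open>F_{h,\<rho>}\<close> of \<open>|V - \<mu>_\<rho>|\<close>.\<close>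
definition kmean :: "('b \<Rightarrow> real measure) \<Rightarrow> 'b \<Rightarrow> real" where
  "kmean K h = (\<integral> v. v \<partial>(K h))"

definition kF :: "('b \<Rightarrow> real measure) \<Rightarrow> 'b \<Rightarrow> real \<Rightarrow> real" where
  "kF K h s = measure (K h) {v. \<bar>v - kmean K h\<bar> \<le> s}"

definition plaus ::
  "(nat \<Rightarrow> real) \<Rightarrow> nat \<Rightarrow> (nat \<Rightarrow> nat \<Rightarrow> real) \<Rightarrow> ((nat \<Rightarrow> real) \<Rightarrow> real measure) \<Rightarrow> real
    \<Rightarrow> (nat \<Rightarrow> real) \<Rightarrow> real" where
  "plaus lam L M K \<rho> x =
     (let h = Hstat lam L M \<rho> x
      in 1 - kF K h \<bar>Tstat L x - phi lam L \<rho> - kmean K h\<bar>)"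

end

theory Submission
  imports Defs
begin

text \<open>Given \<open>H\<^sub>\<rho>(X) = h\<close>, the statistic \<open>T(X) - \<phi>(\<rho>) = \<tau>(U)\<close> has the
  conditional law \<open>K h\<close>, and the plausibility is \<open>1 - F(|V - \<mu>|)\<close> evaluated at a draw
  \<open>V\<close> from \<open>K h\<close>. By the probability integral transform this is uniform as soon as
  \<open>K h\<close> has no atoms, so disintegrating along \<open>H\<^sub>\<rho>(X)\<close> gives probability \<open>\<alpha>\<close> on every
  fibre. The kernel is a.s. atomless because the joint law of \<open>(\<eta>\<^sub>\<rho>(U), \<tau>(U))\<close>
  charges no set with countable sections: \<open>log U\<close> has an absolutely continuous law
  (independent chi-square variables), and moving \<open>log U\<close> in the direction \<open>g(\<rho>)\<close>,
  which the rows of \<open>M\<^sub>\<rho>\<close> annihilate but whose coordinates are positive, leaves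
  \<open>\<eta>\<^sub>\<rho>(U)\<close> fixed and changes \<open>\<tau>(U)\<close> injectively.\<close>

section \<open>Probability integral transform\<close>

lemma (in real_distribution) cdf_superlevel_set_eq_atLeast:
  assumes atomless: "\<And>x. measure M {x} = 0" and "0 < \<beta>" "\<beta> < 1"
  obtains s where "cdf M s = \<beta>" "{t. \<beta> \<le> cdf M t} = {s..}"
proof -
  define T where "T = {t. \<beta> \<le> cdf M t}"
  have cont: "isCont (cdf M) t" for t
    using atomless by (simp add: isCont_cdf)
  have "closed T"
    unfolding T_def by (rule closed_Collect_le) (auto intro!: continuous_at_imp_continuous_on cont)
  have "eventually (\<lambda>t. cdf M t < \<beta>) at_bot"
    using cdf_lim_at_bot \<open>0 < \<beta>\<close> by (rule order_tendstoD)
  then obtain b where b: "\<And>t. t \<le> b \<Longrightarrow> cdf M t < \<beta>"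
    by (auto simp: eventually_at_bot_linorder)
  have "b \<le> t" if "t \<in> T" for t
    using b[of t] that unfolding T_def by force
  then have "bdd_below T" by (rule bdd_belowI)
  have "eventually (\<lambda>t. \<beta> < cdf M t) at_top"
    using cdf_lim_at_top_prob \<open>\<beta> < 1\<close> by (rule order_tendstoD)
  then obtain t where "\<beta> < cdf M t"
    by (auto simp: eventually_at_top_linorder)
  then have "T \<noteq> {}"
    unfolding T_def by (auto intro: less_imp_le)
  define s where "s = Inf T"
  have "s \<in> T"
    unfolding s_def using \<open>T \<noteq> {}\<close> \<open>bdd_below T\<close> \<open>closed T\<close> by (rule closed_contains_Inf)
  have T_eq: "T = {s..}"
  proof
    show "T \<subseteq> {s..}" unfolding s_def using \<open>bdd_below T\<close> by (auto intro: cInf_lower)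
    show "{s..} \<subseteq> T" using \<open>s \<in> T\<close> unfolding T_def by (auto intro: order_trans cdf_nondecreasing)
  qed
  have "cdf M s = \<beta>"
  proof (rule ccontr)
    assume "cdf M s \<noteq> \<beta>"
    with \<open>s \<in> T\<close> have "\<beta> < cdf M s" unfolding T_def by auto
    moreover have "(cdf M \<longlongrightarrow> cdf M s) (at_left s)"
      using cont[of s] by (simp add: isCont_def filterlim_at_split)
    ultimately have "eventually (\<lambda>t. \<beta> < cdf M t) (at_left s)"
      by (simp add: order_tendstoD(1))
    then obtain b where "b < s" "\<And>t. b < t \<Longrightarrow> t < s \<Longrightarrow> \<beta> < cdf M t"
      by (auto simp: eventually_at_left_field)
    then obtain t where "t < s" "\<beta> < cdf M t"
      by (meson dense)
    then have "t \<in> T" unfolding T_def by simp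
    with \<open>t < s\<close> T_eq show False by auto
  qed
  then show thesis using T_eq unfolding T_def by (rule that)
qed

lemma (in real_distribution) measure_cdf_superlevel_set:
  assumes atomless: "\<And>x. measure M {x} = 0" and "0 < \<beta>" "\<beta> < 1"
  shows "measure M {t. \<beta> \<le> cdf M t} = 1 - \<beta>"
proof -
  obtain s where s: "cdf M s = \<beta>" "{t. \<beta> \<le> cdf M t} = {s..}"
    using cdf_superlevel_set_eq_atLeast assms by blast
  have "{s..} = space M - {..<s}" by auto
  then have "measure M {s..} = 1 - measure M {..<s}" using prob_compl[of "{..<s}"] by simp
  also have "{..<s} = {..s} - {s}" by auto
  also have "measure M ({..s} - {s}) = cdf M s"
    using finite_measure_Diff[of "{..s}" "{s}"] atomless by (simp add: cdf_def)
  finally show ?thesis using s by simp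
qed

text \<open>Validity of the default predictive random set \<open>{v. |v - c| \<le> |V - c|}\<close>
  for an atomless law.\<close>
lemma measure_plausibility_le:
  fixes \<mu> :: "real measure"
  assumes "prob_space \<mu>" "sets \<mu> = sets borel" and atomless: "\<And>x. measure \<mu> {x} = 0"
    and "0 < \<alpha>" "\<alpha> < 1"
  shows "measure \<mu> {v. 1 - measure \<mu> {w. \<bar>w - c\<bar> \<le> \<bar>v - c\<bar>} \<le> \<alpha>} = \<alpha>"
proof -
  interpret prob_space \<mu> by fact
  have [measurable_cong]: "sets \<mu> = sets borel" by fact
  have space: "space \<mu> = UNIV" using assms(2) sets_eq_imp_space_eq by fastforce
  define \<nu> where "\<nu> = distr \<mu> borel (\<lambda>w. \<bar>w - c\<bar>)"
  interpret \<nu>: real_distribution \<nu>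
    unfolding \<nu>_def by (auto intro!: real_distribution.intro prob_space_distr simp: real_distribution_axioms_def)
  have measure_\<nu>: "measure \<nu> B = measure \<mu> {w. \<bar>w - c\<bar> \<in> B}" if "B \<in> sets borel" for B
    unfolding \<nu>_def using that by (subst measure_distr) (auto simp: space vimage_def)
  have cdf_\<nu>: "cdf \<nu> t = measure \<mu> {w. \<bar>w - c\<bar> \<le> t}" for t
    by (simp add: cdf_def measure_\<nu>)
  have "measure \<nu> {t} = 0" for t
  proof -
    have "measure \<mu> {w. \<bar>w - c\<bar> = t} \<le> measure \<mu> {c + t, c - t}"
      by (rule finite_measure_mono) (auto simp: assms(2))
    also have "\<dots> \<le> measure \<mu> {c + t} + measure \<mu> {c - t}"
      using measure_subadditive[of "{c + t}" \<mu> "{c - t}"] by (auto simp: assms(2) insert_commute)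
    finally show ?thesis
      using atomless by (simp add: measure_\<nu> measure_le_0_iff)
  qed
  then have "measure \<nu> {t. 1 - \<alpha> \<le> cdf \<nu> t} = \<alpha>"
    using assms by (simp add: \<nu>.measure_cdf_superlevel_set)
  moreover have "{t. 1 - \<alpha> \<le> cdf \<nu> t} \<in> sets borel"
    using borel_measurable_mono[OF monoI, OF \<nu>.cdf_nondecreasing] by measurable
  ultimately show ?thesis
    by (simp add: measure_\<nu> cdf_\<nu> algebra_simps)
qed

section \<open>Regular conditional distributions\<close>

lemma cond_distr_kernel_measurable:
  assumes "cond_distr_kernel M Y Z N K"
  shows "K \<in> measurable N (subprob_algebra borel)"
  using assms unfolding cond_distr_kernel_def
  by (intro measurable_subprob_algebra) (auto simp: prob_space_imp_subprob_space)

lemma cond_distr_kernel_space: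
  assumes "cond_distr_kernel M Y Z N K" "z \<in> space N"
  shows "prob_space (K z)" "sets (K z) = sets borel" "space (K z) = UNIV"
  using assms sets_eq_imp_space_eq[of "K z" borel] unfolding cond_distr_kernel_def by auto

lemma cond_distr_kernel_joint_distr:
  assumes "prob_space M" and K: "cond_distr_kernel M Y Z N K"
    and [measurable]: "Y \<in> borel_measurable M" "Z \<in> measurable M N"
  shows "distr M (N \<Otimes>\<^sub>M borel) (\<lambda>\<omega>. (Z \<omega>, Y \<omega>))
           = distr M N Z \<bind> (\<lambda>z. distr (K z) (N \<Otimes>\<^sub>M borel) (Pair z))"
    (is "?R = ?Q")
proof -
  interpret prob_space M by fact
  have [measurable]: "K \<in> measurable N (subprob_algebra borel)"
    using K by (rule cond_distr_kernel_measurable)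
  define F where "F z = distr (K z) (N \<Otimes>\<^sub>M borel) (Pair z)" for z
  have F: "F \<in> measurable (distr M N Z) (subprob_algebra (N \<Otimes>\<^sub>M borel))"
    unfolding F_def by simp (rule measurable_distr2; measurable)
  have "space (distr M N Z) \<noteq> {}"
    using measurable_space[of Z M N] not_empty by auto
  note emeasure_bind = emeasure_bind[OF this F]
  have emeasure_F: "emeasure (F z) (a \<times> b) = indicator a z * emeasure (K z) b"
    if "z \<in> space N" "a \<in> sets N" "b \<in> sets borel" for z a b
    using that cond_distr_kernel_space[OF K \<open>z \<in> space N\<close>] unfolding F_def
    by (subst emeasure_distr)
       (auto simp: measurable_def space_pair_measure indicator_def vimage_def
             cong: measurable_cong_sets intro!: arg_cong[where f="emeasure (K z)"])
  show ?thesis unfolding F_def[symmetric]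
  proof (rule measure_eqI_generator_eq[OF Int_stable_pair_measure_generator[of N borel]])
    show "{a \<times> b |a b. a \<in> sets N \<and> b \<in> sets borel} \<subseteq> Pow (space N \<times> space borel)"
      using sets.sets_into_space by fastforce
    show "sets ?R = sigma_sets (space N \<times> space borel) {a \<times> b |a b. a \<in> sets N \<and> b \<in> sets borel}"
      by (simp add: sets_pair_measure)
    show "sets (distr M N Z \<bind> F) = sigma_sets (space N \<times> space borel) {a \<times> b |a b. a \<in> sets N \<and> b \<in> sets borel}"
      using measurable_space[of Z M N] not_empty
      by (subst sets_bind[where N="N \<Otimes>\<^sub>M borel"]) (auto simp: F_def sets_pair_measure)
    show "range (\<lambda>i. space N \<times> space borel) \<subseteq> {a \<times> b |a b. a \<in> sets N \<and> b \<in> sets borel}"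
      by blast
    show "emeasure ?R (space N \<times> space borel) \<noteq> \<infinity>"
      using prob_space.emeasure_space_1[OF prob_space_distr, of "\<lambda>\<omega>. (Z \<omega>, Y \<omega>)" "N \<Otimes>\<^sub>M borel"]
      by (simp add: space_pair_measure)
  qed (use K in \<open>auto simp: emeasure_distr emeasure_bind emeasure_F vimage_def Int_def
                 conj_commute cond_distr_kernel_def intro!: nn_integral_cong\<close>)
qed

lemma cond_distr_kernel_emeasure_joint:
  assumes "prob_space M" and K: "cond_distr_kernel M Y Z N K"
    and [measurable]: "Y \<in> borel_measurable M" "Z \<in> measurable M N"
    and A: "A \<in> sets (N \<Otimes>\<^sub>M borel)"
  shows "emeasure M {\<omega>\<in>space M. (Z \<omega>, Y \<omega>) \<in> A} = (\<integral>\<^sup>+z. emeasure (K z) (Pair z -` A) \<partial>distr M N Z)"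
proof -
  interpret prob_space M by fact
  have [measurable]: "K \<in> measurable N (subprob_algebra borel)"
    using K by (rule cond_distr_kernel_measurable)
  have "space (distr M N Z) \<noteq> {}"
    using measurable_space[of Z M N] not_empty by auto
  have "(\<lambda>z. distr (K z) (N \<Otimes>\<^sub>M borel) (Pair z)) \<in> measurable (distr M N Z) (subprob_algebra (N \<Otimes>\<^sub>M borel))"
    by simp (rule measurable_distr2; measurable)
  note emeasure_bind = emeasure_bind[OF \<open>space (distr M N Z) \<noteq> {}\<close> this]
  have "emeasure M {\<omega>\<in>space M. (Z \<omega>, Y \<omega>) \<in> A} = emeasure (distr M (N \<Otimes>\<^sub>M borel) (\<lambda>\<omega>. (Z \<omega>, Y \<omega>))) A"
    using A by (subst emeasure_distr) (auto simp: vimage_def Int_def conj_commute)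
  also have "\<dots> = (\<integral>\<^sup>+z. emeasure (distr (K z) (N \<Otimes>\<^sub>M borel) (Pair z)) A \<partial>distr M N Z)"
    unfolding cond_distr_kernel_joint_distr[OF assms(1-4)]
    using A by (simp add: emeasure_bind)
  also have "\<dots> = (\<integral>\<^sup>+z. emeasure (K z) (Pair z -` A) \<partial>distr M N Z)"
  proof (rule nn_integral_cong)
    fix z assume "z \<in> space (distr M N Z)"
    then have "z \<in> space N" by simp
    with A show "emeasure (distr (K z) (N \<Otimes>\<^sub>M borel) (Pair z)) A = emeasure (K z) (Pair z -` A)"
      using cond_distr_kernel_space[OF K \<open>z \<in> space N\<close>]
      by (subst emeasure_distr) (auto simp: measurable_def space_pair_measure cong: measurable_cong_sets)
  qed
  finally show ?thesis .
qed

lemma measurable_measure_singleton_kernel: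
  assumes "K \<in> measurable N (subprob_algebra borel)"
  shows "(\<lambda>p. measure (K (fst p)) {snd p :: real}) \<in> borel_measurable (N \<Otimes>\<^sub>M borel)"
proof (rule measure_measurable_subprob_algebra2[OF _ measurable_compose[OF measurable_fst assms]])
  have "(SIGMA p:space (N \<Otimes>\<^sub>M borel). {snd p :: real})
      = {q \<in> space ((N \<Otimes>\<^sub>M borel) \<Otimes>\<^sub>M borel). snd q \<le> snd (fst q) \<and> snd (fst q) \<le> snd q}"
    by (force simp: space_pair_measure)
  also have "\<dots> \<in> sets ((N \<Otimes>\<^sub>M borel) \<Otimes>\<^sub>M borel)"
    by measurable
  finally show "(SIGMA p:space (N \<Otimes>\<^sub>M borel). {snd p :: real}) \<in> sets ((N \<Otimes>\<^sub>M borel) \<Otimes>\<^sub>M borel)" .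
qed

text \<open>The pairs \<open>(z, v)\<close> at which \<open>K z\<close> has an atom form a measurable set with
  countable sections.\<close>
lemma cond_distr_kernel_AE_atomless:
  assumes "prob_space M" and K: "cond_distr_kernel M Y Z N K"
    and [measurable]: "Y \<in> borel_measurable M" "Z \<in> measurable M N"
    and null: "\<And>A. A \<in> sets (N \<Otimes>\<^sub>M borel) \<Longrightarrow> (\<And>z. countable (Pair z -` A)) \<Longrightarrow>
                 AE \<omega> in M. (Z \<omega>, Y \<omega>) \<notin> A"
  shows "AE z in distr M N Z. \<forall>v. measure (K z) {v} = 0"
proof -
  have [measurable]: "K \<in> measurable N (subprob_algebra borel)"
    using K by (rule cond_distr_kernel_measurable)
  define A where "A = {p \<in> space (N \<Otimes>\<^sub>M borel). measure (K (fst p)) {snd p} \<noteq> 0}"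
  have A: "A \<in> sets (N \<Otimes>\<^sub>M borel)"
    unfolding A_def using measurable_measure_singleton_kernel by measurable
  have sections: "Pair z -` A = {v. measure (K z) {v} \<noteq> 0}" if "z \<in> space N" for z
    using that by (auto simp: A_def space_pair_measure)
  have "countable (Pair z -` A)" for z
  proof (cases "z \<in> space N")
    case True
    interpret prob_space "K z" using cond_distr_kernel_space[OF K True] by simp
    show ?thesis using countable_support by (simp add: sections[OF True])
  qed (auto simp: A_def space_pair_measure)
  then have "AE \<omega> in M. (Z \<omega>, Y \<omega>) \<notin> A"
    by (rule null[OF A])
  moreover have "{\<omega>\<in>space M. (Z \<omega>, Y \<omega>) \<in> A} \<in> sets M"
    using A by measurable
  ultimately have "(\<integral>\<^sup>+z. emeasure (K z) (Pair z -` A) \<partial>distr M N Z) = 0"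
    using cond_distr_kernel_emeasure_joint[OF assms(1-4) A] by (simp add: AE_iff_measurable[OF _ refl])
  moreover have "(SIGMA z:space N. Pair z -` A) = A"
    unfolding A_def by (auto simp: space_pair_measure)
  with A have "(\<lambda>z. emeasure (K z) (Pair z -` A)) \<in> borel_measurable N"
    by (intro emeasure_measurable_subprob_algebra2) auto
  ultimately have "AE z in distr M N Z. emeasure (K z) (Pair z -` A) = 0"
    by (subst (asm) nn_integral_0_iff_AE) auto
  then show ?thesis
  proof (rule AE_mp[OF _ AE_I2], intro impI allI)
    fix z v assume "z \<in> space (distr M N Z)" and atoms_null: "emeasure (K z) (Pair z -` A) = 0"
    then have "z \<in> space N" by simp
    note K_z = cond_distr_kernel_space[OF K this]
    have "Pair z -` A \<in> sets (K z)"
      using sets_Pair1[OF A] K_z by simp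
    then have "emeasure (K z) {v} = 0" if "measure (K z) {v} \<noteq> 0"
      using emeasure_mono[of "{v}" "Pair z -` A" "K z"] that atoms_null
      by (simp add: sections[OF \<open>z \<in> space N\<close>])
    then show "measure (K z) {v} = 0"
      by (metis measure_def enn2real_0)
  qed
qed

lemma borel_measurable_kmean:
  assumes "K \<in> measurable N (subprob_algebra borel)"
  shows "kmean K \<in> borel_measurable N"
  unfolding kmean_def[abs_def]
  using measurable_compose[OF assms integral_measurable_subprob_algebra[of "\<lambda>v::real. v" borel]] by simp

lemma borel_measurable_kF:
  assumes K: "K \<in> measurable N (subprob_algebra borel)"
  shows "(\<lambda>p. kF K (fst p) (snd p)) \<in> borel_measurable (N \<Otimes>\<^sub>M borel)"
  unfolding kF_def
proof (rule measure_measurable_subprob_algebra2[OF _ measurable_compose[OF measurable_fst K]])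
  note [measurable] = K borel_measurable_kmean[OF K]
  have "(SIGMA p:space (N \<Otimes>\<^sub>M borel). {v. \<bar>v - kmean K (fst p)\<bar> \<le> snd p})
      = {q \<in> space ((N \<Otimes>\<^sub>M borel) \<Otimes>\<^sub>M borel). \<bar>snd q - kmean K (fst (fst q))\<bar> \<le> snd (fst q)}"
    by (auto simp: space_pair_measure)
  also have "\<dots> \<in> sets ((N \<Otimes>\<^sub>M borel) \<Otimes>\<^sub>M borel)"
    by measurable
  finally show "(SIGMA p:space (N \<Otimes>\<^sub>M borel). {v. \<bar>v - kmean K (fst p)\<bar> \<le> snd p})
      \<in> sets ((N \<Otimes>\<^sub>M borel) \<Otimes>\<^sub>M borel)" .
qed

lemma sets_plausibility_le:
  assumes K: "K \<in> measurable N (subprob_algebra borel)"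
  shows "{p \<in> space (N \<Otimes>\<^sub>M borel). 1 - kF K (fst p) \<bar>snd p - kmean K (fst p)\<bar> \<le> \<alpha>} \<in> sets (N \<Otimes>\<^sub>M borel)"
proof -
  note [measurable] = borel_measurable_kmean[OF K]
  have "(\<lambda>p. (fst p, \<bar>snd p - kmean K (fst p)\<bar>)) \<in> measurable (N \<Otimes>\<^sub>M borel) (N \<Otimes>\<^sub>M borel)"
    by measurable
  from measurable_compose[OF this borel_measurable_kF[OF K]]
  have [measurable]: "(\<lambda>p. kF K (fst p) \<bar>snd p - kmean K (fst p)\<bar>) \<in> borel_measurable (N \<Otimes>\<^sub>M borel)"
    by simp
  show ?thesis
    by measurable
qed

theorem cond_distr_kernel_plausibility_valid:
  assumes "prob_space M" and K: "cond_distr_kernel M Y Z N K"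
    and [measurable]: "Y \<in> borel_measurable M" "Z \<in> measurable M N"
    and atomless: "AE z in distr M N Z. \<forall>v. measure (K z) {v} = 0"
    and [measurable]: "T \<in> borel_measurable M" and TY: "AE \<omega> in M. T \<omega> = Y \<omega>"
    and [measurable]: "C \<in> sets N" and "0 < \<alpha>" "\<alpha> < 1"
  shows "measure M {\<omega>\<in>space M. 1 - kF K (Z \<omega>) \<bar>T \<omega> - kmean K (Z \<omega>)\<bar> \<le> \<alpha> \<and> Z \<omega> \<in> C}
           = \<alpha> * measure M {\<omega>\<in>space M. Z \<omega> \<in> C}"
proof -
  interpret prob_space M by fact
  define S where
    "S = {p \<in> space (N \<Otimes>\<^sub>M borel). fst p \<in> C \<and> 1 - kF K (fst p) \<bar>snd p - kmean K (fst p)\<bar> \<le> \<alpha>}"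
  have "S = (C \<times> space borel) \<inter> {p \<in> space (N \<Otimes>\<^sub>M borel). 1 - kF K (fst p) \<bar>snd p - kmean K (fst p)\<bar> \<le> \<alpha>}"
    by (auto simp: S_def)
  then have S[measurable]: "S \<in> sets (N \<Otimes>\<^sub>M borel)"
    using sets_plausibility_le[OF cond_distr_kernel_measurable[OF K]] \<open>C \<in> sets N\<close>
    by (simp add: sets.Int pair_measureI)
  have "emeasure M {\<omega>\<in>space M. (Z \<omega>, Y \<omega>) \<in> S} = (\<integral>\<^sup>+z. emeasure (K z) (Pair z -` S) \<partial>distr M N Z)"
    using cond_distr_kernel_emeasure_joint[OF assms(1-4) S] .
  also have "\<dots> = (\<integral>\<^sup>+z. ennreal \<alpha> * indicator C z \<partial>distr M N Z)"
  proof (rule nn_integral_cong_AE)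
    show "AE z in distr M N Z. emeasure (K z) (Pair z -` S) = ennreal \<alpha> * indicator C z"
      using atomless AE_space
    proof eventually_elim
      case (elim z)
      then have "z \<in> space N" by simp
      note K_z = cond_distr_kernel_space[OF K this]
      interpret K_z: prob_space "K z" by (rule K_z(1))
      have "Pair z -` S = (if z \<in> C then {v. 1 - measure (K z) {w. \<bar>w - kmean K z\<bar> \<le> \<bar>v - kmean K z\<bar>} \<le> \<alpha>} else {})"
        using \<open>z \<in> space N\<close> by (auto simp: S_def kF_def space_pair_measure)
      then show ?case
        using measure_plausibility_le[OF K_z(1,2)] elim \<open>0 < \<alpha>\<close> \<open>\<alpha> < 1\<close>
          K_z.emeasure_eq_measure
        by (simp add: indicator_def)
    qed
  qed
  also have "\<dots> = ennreal \<alpha> * emeasure M {\<omega>\<in>space M. Z \<omega> \<in> C}"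
    by (simp add: nn_integral_cmult_indicator emeasure_distr vimage_def Int_def conj_commute)
  finally have "emeasure M {\<omega>\<in>space M. (Z \<omega>, Y \<omega>) \<in> S} = ennreal \<alpha> * emeasure M {\<omega>\<in>space M. Z \<omega> \<in> C}" .
  moreover have "emeasure M {\<omega>\<in>space M. (Z \<omega>, T \<omega>) \<in> S} = emeasure M {\<omega>\<in>space M. (Z \<omega>, Y \<omega>) \<in> S}"
    using TY S by (intro emeasure_eq_AE) (auto, measurable)
  moreover have "{\<omega>\<in>space M. (Z \<omega>, T \<omega>) \<in> S}
      = {\<omega>\<in>space M. 1 - kF K (Z \<omega>) \<bar>T \<omega> - kmean K (Z \<omega>)\<bar> \<le> \<alpha> \<and> Z \<omega> \<in> C}"
    using measurable_space[of Z M N] by (auto simp: S_def space_pair_measure)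
  ultimately show ?thesis
    using \<open>0 < \<alpha>\<close> by (simp add: emeasure_eq_measure ennreal_mult[symmetric])
qed

section \<open>Null sets of finite products of Lebesgue measure\<close>

lemma product_sigma_finite_lborel: "product_sigma_finite (\<lambda>_::'i. lborel :: real measure)"
  by (simp add: product_sigma_finite_def sigma_finite_lborel)

lemma emeasure_lborel_vimage_translate:
  fixes c :: real
  assumes "A \<in> sets borel"
  shows "emeasure lborel ((\<lambda>v. v + c) -` A) = emeasure lborel A"
proof -
  have "emeasure lborel A = emeasure (distr lborel borel ((+) c)) A"
    by (simp add: lborel_distr_plus)
  also have "\<dots> = emeasure lborel ((+) c -` A)"
    using assms by (simp add: emeasure_distr)
  also have "(+) c -` A = (\<lambda>v. v + c) -` A"
    by (auto simp: add.commute)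
  finally show ?thesis ..
qed

lemma distr_PiM_lborel_translate:
  fixes t :: "'i \<Rightarrow> real"
  assumes I: "finite I"
  shows "distr (PiM I (\<lambda>_. lborel)) (PiM I (\<lambda>_. lborel)) (\<lambda>x. \<lambda>i\<in>I. x i + t i) = PiM I (\<lambda>_. lborel)"
proof -
  interpret product_sigma_finite "\<lambda>_::'i. lborel :: real measure"
    by (rule product_sigma_finite_lborel)
  have [measurable]: "(\<lambda>x. \<lambda>i\<in>I. x i + t i) \<in> measurable (PiM I (\<lambda>_. lborel)) (PiM I (\<lambda>_. lborel))"
    by measurable
  show ?thesis
  proof (rule PiM_eqI[OF I])
    fix A :: "'i \<Rightarrow> real set" assume A: "\<And>i. i \<in> I \<Longrightarrow> A i \<in> sets lborel"
    have "(\<lambda>x. \<lambda>i\<in>I. x i + t i) -` Pi\<^sub>E I A \<inter> space (PiM I (\<lambda>_. lborel))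
        = Pi\<^sub>E I (\<lambda>i. (\<lambda>v. v + t i) -` A i)"
      by (auto simp: space_PiM PiE_def Pi_def extensional_def)
    moreover have "(\<lambda>v. v + t i) -` A i \<in> sets borel" if "i \<in> I" for i
      using measurable_sets[of "\<lambda>v::real. v + t i" borel borel "A i"] A[OF that] by simp
    ultimately show "emeasure (distr (PiM I (\<lambda>_. lborel)) (PiM I (\<lambda>_. lborel)) (\<lambda>x. \<lambda>i\<in>I. x i + t i)) (Pi\<^sub>E I A)
        = (\<Prod>i\<in>I. emeasure lborel (A i))"
      using A by (subst emeasure_distr) (auto simp: emeasure_PiM I emeasure_lborel_vimage_translate
          intro!: sets_PiM_I_finite prod.cong)
  qed simp
qed

lemma nn_integral_PiM_lborel_translate:
  fixes t :: "'i \<Rightarrow> real"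
  assumes "finite I" and [measurable]: "f \<in> borel_measurable (PiM I (\<lambda>_. lborel))"
  shows "(\<integral>\<^sup>+x. f (\<lambda>i\<in>I. x i + t i) \<partial>PiM I (\<lambda>_. lborel)) = (\<integral>\<^sup>+x. f x \<partial>PiM I (\<lambda>_. lborel))"
proof -
  have "(\<integral>\<^sup>+x. f x \<partial>PiM I (\<lambda>_. lborel))
      = (\<integral>\<^sup>+x. f x \<partial>distr (PiM I (\<lambda>_. lborel)) (PiM I (\<lambda>_. lborel)) (\<lambda>x. \<lambda>i\<in>I. x i + t i))"
    by (simp add: distr_PiM_lborel_translate[OF \<open>finite I\<close>])
  also have "\<dots> = (\<integral>\<^sup>+x. f (\<lambda>i\<in>I. x i + t i) \<partial>PiM I (\<lambda>_. lborel))"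
    by (rule nn_integral_distr) measurable
  finally show ?thesis ..
qed

lemma measurable_fun_upd_PiM:
  assumes "k \<notin> J" "y \<in> space (M k)"
  shows "(\<lambda>x. x(k := y)) \<in> measurable (PiM J M) (PiM (insert k J) M)"
proof (subst measurable_cong)
  show "x(k := y) = (\<lambda>i\<in>insert k J. if i = k then y else x i)" if "x \<in> space (PiM J M)" for x
    using that assms(1) by (auto simp: space_PiM PiE_def extensional_def fun_eq_iff)
  show "(\<lambda>x. \<lambda>i\<in>insert k J. if i = k then y else x i) \<in> measurable (PiM J M) (PiM (insert k J) M)"
  proof (rule measurable_restrict)
    fix i assume "i \<in> insert k J"
    then show "(\<lambda>x. if i = k then y else x i) \<in> measurable (PiM J M) (M i)"
      using assms by (cases "i = k") (auto simp: measurable_component_singleton)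
  qed
qed

text \<open>Tonelli along the lines in direction \<open>d\<close>: shearing along \<open>d\<close> preserves
  Lebesgue measure.\<close>
lemma nn_integral_PiM_lborel_lines:
  fixes d :: "'i \<Rightarrow> real"
  assumes "finite I" "k \<in> I" "d k = 1" and [measurable]: "f \<in> borel_measurable (PiM I (\<lambda>_. lborel))"
  shows "(\<integral>\<^sup>+x. f x \<partial>PiM I (\<lambda>_. lborel))
           = (\<integral>\<^sup>+x. (\<integral>\<^sup>+y. f (\<lambda>i\<in>I. (x(k := 0)) i + y * d i) \<partial>lborel) \<partial>PiM (I - {k}) (\<lambda>_. lborel))"
proof -
  interpret product_sigma_finite "\<lambda>_::'i. lborel :: real measure"
    by (rule product_sigma_finite_lborel)
  define J where "J = I - {k}"
  have J: "finite J" "k \<notin> J" "insert k J = I"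
    using assms by (auto simp: J_def)
  define G where "G x y = (\<lambda>i\<in>I. (x(k := 0)) i + y * d i)" for x :: "'i \<Rightarrow> real" and y
  have G_eq: "G x y = (\<lambda>i\<in>J. x i + y * d i)(k := y)" for x y
    using J \<open>d k = 1\<close> by (auto simp: G_def fun_eq_iff)
  have [measurable]: "(\<lambda>x. x(k := y)) \<in> measurable (PiM J (\<lambda>_. lborel)) (PiM I (\<lambda>_. lborel))" for y :: real
    using measurable_fun_upd_PiM[OF J(2), of y "\<lambda>_. lborel"] by (simp add: J(3))
  have "(\<lambda>p. G (fst p) (snd p)) \<in> measurable (PiM J (\<lambda>_. lborel) \<Otimes>\<^sub>M lborel) (PiM I (\<lambda>_. lborel))"
    unfolding G_def using J by (intro measurable_restrict) (auto simp: measurable_component_singleton)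
  from measurable_compose[OF this, of f]
  have G_meas: "case_prod (\<lambda>x y. f (G x y)) \<in> borel_measurable (PiM J (\<lambda>_. lborel) \<Otimes>\<^sub>M lborel)"
    by (simp add: case_prod_beta')
  have "(\<integral>\<^sup>+x. f x \<partial>PiM I (\<lambda>_. lborel)) = (\<integral>\<^sup>+y. (\<integral>\<^sup>+x. f (x(k := y)) \<partial>PiM J (\<lambda>_. lborel)) \<partial>lborel)"
    unfolding J(3)[symmetric] by (rule product_nn_integral_insert_rev) (auto simp: J)
  also have "\<dots> = (\<integral>\<^sup>+y. (\<integral>\<^sup>+x. f (G x y) \<partial>PiM J (\<lambda>_. lborel)) \<partial>lborel)"
    unfolding G_eq by (intro nn_integral_cong nn_integral_PiM_lborel_translate[symmetric, OF J(1)]) measurable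
  also have "\<dots> = (\<integral>\<^sup>+x. (\<integral>\<^sup>+y. f (G x y) \<partial>lborel) \<partial>PiM J (\<lambda>_. lborel))"
    using G_meas by (intro pair_sigma_finite.Fubini' pair_sigma_finite.intro sigma_finite sigma_finite_lborel J)
  finally show ?thesis
    by (simp add: G_def J_def)
qed

lemma emeasure_PiM_lborel_eq_0_if_countable_lines:
  fixes d :: "'i \<Rightarrow> real"
  assumes "finite I" "k \<in> I" "d k = 1"
    and S[measurable]: "S \<in> sets (PiM I (\<lambda>_. lborel))"
    and lines: "\<And>x. x \<in> space (PiM I (\<lambda>_. lborel)) \<Longrightarrow> countable {y. (\<lambda>i\<in>I. x i + y * d i) \<in> S}"
  shows "emeasure (PiM I (\<lambda>_. lborel)) S = 0"
proof -
  have "emeasure (PiM I (\<lambda>_. lborel)) S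
      = (\<integral>\<^sup>+x. (\<integral>\<^sup>+y. indicator S (\<lambda>i\<in>I. (x(k := 0)) i + y * d i) \<partial>lborel) \<partial>PiM (I - {k}) (\<lambda>_. lborel))"
    using nn_integral_PiM_lborel_lines[of I k d "indicator S"] assms by simp
  also have "\<dots> = (\<integral>\<^sup>+x. 0 \<partial>PiM (I - {k}) (\<lambda>_. lborel :: real measure))"
  proof (rule nn_integral_cong)
    fix x :: "'i \<Rightarrow> real"
    have "(\<lambda>i\<in>I. (x(k := 0)) i) \<in> space (PiM I (\<lambda>_. lborel))"
      by (simp add: space_PiM)
    from lines[OF this] have "countable {y. (\<lambda>i\<in>I. (x(k := 0)) i + y * d i) \<in> S}"
      by (simp cong: restrict_cong)
    then have "{y. (\<lambda>i\<in>I. (x(k := 0)) i + y * d i) \<in> S} \<in> null_sets lborel"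
      by (rule countable_imp_null_set_lborel)
    then show "(\<integral>\<^sup>+y. indicator S (\<lambda>i\<in>I. (x(k := 0)) i + y * d i) \<partial>lborel) = 0"
      using nn_integral_indicator[of "{y. (\<lambda>i\<in>I. (x(k := 0)) i + y * d i) \<in> S}" lborel]
      by (simp add: indicator_def null_sets_def)
  qed
  finally show ?thesis by simp
qed

text \<open>Along each line in direction \<open>d\<close>, \<open>M x\<close> is constant and \<open>\<Sum>x\<close> is injective.\<close>
lemma PiM_lborel_linear_vimage_null:
  fixes Mr :: "'j \<Rightarrow> 'i \<Rightarrow> real" and d :: "'i \<Rightarrow> real"
  assumes "finite I"
    and kernel: "\<And>j. j \<in> J \<Longrightarrow> (\<Sum>i\<in>I. Mr j i * d i) = 0" and "(\<Sum>i\<in>I. d i) \<noteq> 0"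
    and A: "A \<in> sets (PiM J (\<lambda>_. borel) \<Otimes>\<^sub>M borel)" and countable: "\<And>h. countable (Pair h -` A)"
  shows "{x \<in> space (PiM I (\<lambda>_. lborel)). (\<lambda>j\<in>J. \<Sum>i\<in>I. Mr j i * x i, \<Sum>i\<in>I. x i) \<in> A}
           \<in> null_sets (PiM I (\<lambda>_. lborel))"
proof -
  obtain k where "k \<in> I" "d k \<noteq> 0"
    using \<open>(\<Sum>i\<in>I. d i) \<noteq> 0\<close> by (meson sum.neutral)
  define e where "e i = d i / d k" for i
  define D where "D = (\<Sum>i\<in>I. e i)"
  have "D \<noteq> 0"
    using \<open>(\<Sum>i\<in>I. d i) \<noteq> 0\<close> \<open>d k \<noteq> 0\<close> by (simp add: D_def e_def flip: sum_divide_distrib)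
  have e_kernel: "(\<Sum>i\<in>I. Mr j i * e i) = 0" if "j \<in> J" for j
    using kernel[OF that] by (simp add: e_def flip: sum_divide_distrib)
  define S where
    "S = {x \<in> space (PiM I (\<lambda>_. lborel)). (\<lambda>j\<in>J. \<Sum>i\<in>I. Mr j i * x i, \<Sum>i\<in>I. x i) \<in> A}"
  have "(\<lambda>x. (\<lambda>j\<in>J. \<Sum>i\<in>I. Mr j i * x i, \<Sum>i\<in>I. x i))
      \<in> measurable (PiM I (\<lambda>_. lborel)) (PiM J (\<lambda>_. borel) \<Otimes>\<^sub>M borel)"
    by (intro measurable_Pair measurable_restrict borel_measurable_sum borel_measurable_times
        borel_measurable_const) (simp_all add: measurable_component_singleton)
  from measurable_sets[OF this A] have "S \<in> sets (PiM I (\<lambda>_. lborel))"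
    by (simp add: S_def vimage_def Int_def conj_commute)
  moreover have "emeasure (PiM I (\<lambda>_. lborel)) S = 0"
  proof (rule emeasure_PiM_lborel_eq_0_if_countable_lines[OF \<open>finite I\<close> \<open>k \<in> I\<close> _ \<open>S \<in> _\<close>])
    show "e k = 1" using \<open>d k \<noteq> 0\<close> by (simp add: e_def)
    fix x :: "'i \<Rightarrow> real"
    define h where "h = (\<lambda>j\<in>J. \<Sum>i\<in>I. Mr j i * x i)"
    have "y \<in> (\<lambda>v. (v - (\<Sum>i\<in>I. x i)) / D) ` (Pair h -` A)" if "(\<lambda>i\<in>I. x i + y * e i) \<in> S" for y
    proof
      have "(\<lambda>j\<in>J. \<Sum>i\<in>I. Mr j i * (x i + y * e i)) = h"
        using e_kernel by (auto simp: h_def algebra_simps sum.distrib simp flip: sum_distrib_left)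
      moreover have "(\<Sum>i\<in>I. x i + y * e i) = (\<Sum>i\<in>I. x i) + y * D"
        by (simp add: D_def sum.distrib sum_distrib_left)
      ultimately show "(\<Sum>i\<in>I. x i) + y * D \<in> Pair h -` A"
        using that by (simp add: S_def)
      show "y = ((\<Sum>i\<in>I. x i) + y * D - (\<Sum>i\<in>I. x i)) / D"
        using \<open>D \<noteq> 0\<close> by simp
    qed
    then show "countable {y. (\<lambda>i\<in>I. x i + y * e i) \<in> S}"
      using countable by (blast intro: countable_subset)
  qed
  ultimately show ?thesis
    unfolding S_def by (rule null_setsI[rotated])
qed

lemma indicator_PiE_eq_prod:
  fixes A :: "'i \<Rightarrow> 'b set"
  assumes "finite I" "x \<in> extensional I"
  shows "(indicator (Pi\<^sub>E I A) x :: ennreal) = (\<Prod>i\<in>I. indicator (A i) (x i))"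
proof (cases "x \<in> Pi\<^sub>E I A")
  case False
  with assms obtain i where "i \<in> I" "x i \<notin> A i" by (auto simp: PiE_def)
  with assms(1) have "(\<Prod>i\<in>I. indicator (A i) (x i) :: ennreal) = 0"
    by (intro prod_zero bexI[of _ i]) auto
  with False show ?thesis by simp
qed (auto simp: PiE_iff intro!: prod.neutral)

lemma PiM_density_lborel:
  fixes f :: "'i \<Rightarrow> real \<Rightarrow> ennreal"
  assumes I: "finite I" and [measurable]: "\<And>i. f i \<in> borel_measurable lborel"
    and "\<And>i. sigma_finite_measure (density lborel (f i))"
  shows "PiM I (\<lambda>i. density lborel (f i)) = density (PiM I (\<lambda>_. lborel)) (\<lambda>x. \<Prod>i\<in>I. f i (x i))"
proof -
  interpret D: product_sigma_finite "\<lambda>i. density lborel (f i)"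
    by (simp add: product_sigma_finite_def assms)
  interpret L: product_sigma_finite "\<lambda>_::'i. lborel :: real measure"
    by (rule product_sigma_finite_lborel)
  show ?thesis
  proof (rule D.PiM_eqI[OF I, symmetric])
    fix A :: "'i \<Rightarrow> real set" assume A: "\<And>i. i \<in> I \<Longrightarrow> A i \<in> sets (density lborel (f i))"
    then have "Pi\<^sub>E I A \<in> sets (PiM I (\<lambda>_. lborel))"
      by (intro sets_PiM_I_finite I) auto
    then have "emeasure (density (PiM I (\<lambda>_. lborel)) (\<lambda>x. \<Prod>i\<in>I. f i (x i))) (Pi\<^sub>E I A)
        = (\<integral>\<^sup>+x. (\<Prod>i\<in>I. f i (x i) * indicator (A i) (x i)) \<partial>PiM I (\<lambda>_. lborel))"
      by (auto simp: emeasure_density space_PiM PiE_iff indicator_PiE_eq_prod[OF I] prod.distrib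
          intro!: nn_integral_cong)
    also have "\<dots> = (\<Prod>i\<in>I. emeasure (density lborel (f i)) (A i))"
      using A by (subst L.product_nn_integral_prod) (auto simp: I emeasure_density)
    finally show "emeasure (density (PiM I (\<lambda>_. lborel)) (\<lambda>x. \<Prod>i\<in>I. f i (x i))) (Pi\<^sub>E I A)
        = (\<Prod>i\<in>I. emeasure (density lborel (f i)) (A i))" .
  qed (simp cong: sets_PiM_cong)
qed

text \<open>The joint law is the product of the marginals, so it has the product of their
  Radon-Nikodym densities as density.\<close>
lemma indep_vars_absolutely_continuous_PiM_lborel:
  fixes X :: "'i \<Rightarrow> 'a \<Rightarrow> real"
  assumes "prob_space M" "finite I" "I \<noteq> {}"
    and indep: "prob_space.indep_vars M (\<lambda>_. borel) X I"
    and ac: "\<And>i. i \<in> I \<Longrightarrow> absolutely_continuous lborel (distr M lborel (X i))"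
  shows "absolutely_continuous (PiM I (\<lambda>_. lborel)) (distr M (PiM I (\<lambda>_. lborel)) (\<lambda>\<omega>. \<lambda>i\<in>I. X i \<omega>))"
proof -
  interpret prob_space M by fact
  have X[measurable]: "X i \<in> borel_measurable M" if "i \<in> I" for i
    using indep that by (simp add: indep_vars_def)
  have "\<exists>f\<in>borel_measurable lborel. density lborel f = distr M lborel (X i)" if "i \<in> I" for i
    using ac[OF that] by (intro sigma_finite_measure.Radon_Nikodym sigma_finite_lborel) auto
  then obtain f where f_meas: "\<And>i. i \<in> I \<Longrightarrow> f i \<in> borel_measurable lborel"
    and f_density: "\<And>i. i \<in> I \<Longrightarrow> density lborel (f i) = distr M lborel (X i)"
    by metis
  define g where "g i = (if i \<in> I then f i else (\<lambda>_. 0))" for i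
  have g_meas: "g i \<in> borel_measurable lborel" for i
    using f_meas[of i] by (cases "i \<in> I") (simp_all add: g_def)
  have "finite_measure (density lborel (g i))" for i
  proof (cases "i \<in> I")
    case True
    then have "prob_space (density lborel (g i))"
      using X[OF True] by (simp add: g_def f_density prob_space_distr)
    then show ?thesis by (simp add: prob_space_def)
  qed (simp add: g_def finite_measureI emeasure_density)
  then have g_finite: "sigma_finite_measure (density lborel (g i))" for i
    by (simp add: finite_measure_def)
  have "distr M (PiM I (\<lambda>_. lborel)) (\<lambda>\<omega>. \<lambda>i\<in>I. X i \<omega>) = distr M (PiM I (\<lambda>_. borel)) (\<lambda>\<omega>. \<lambda>i\<in>I. X i \<omega>)"
    by (rule distr_cong) (simp_all cong: sets_PiM_cong)
  also have "\<dots> = PiM I (\<lambda>i. distr M borel (X i))"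
    using indep_vars_iff_distr_eq_PiM'[where M'="\<lambda>_. borel" and X=X, OF \<open>I \<noteq> {}\<close> X] indep by simp
  also have "\<dots> = PiM I (\<lambda>i. density lborel (g i))"
    using f_density by (intro PiM_cong) (auto simp: g_def intro: distr_cong)
  also have "\<dots> = density (PiM I (\<lambda>_. lborel)) (\<lambda>x. \<Prod>i\<in>I. g i (x i))"
    by (rule PiM_density_lborel[OF \<open>finite I\<close> g_meas g_finite])
  finally show ?thesis
    using g_meas by (simp add: absolutely_continuousI_density)
qed

lemma PiM_lborel_vimage_diff_null:
  fixes c :: "'i \<Rightarrow> real"
  assumes "finite I" "k \<notin> I" and N: "N \<in> null_sets (PiM I (\<lambda>_. lborel))"
  shows "{w \<in> space (PiM (insert k I) (\<lambda>_. lborel)). (\<lambda>i\<in>I. w i - w k + c i) \<in> N}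
           \<in> null_sets (PiM (insert k I) (\<lambda>_. lborel))"
proof -
  interpret product_sigma_finite "\<lambda>_::'i. lborel :: real measure"
    by (rule product_sigma_finite_lborel)
  have [measurable]: "N \<in> sets (PiM I (\<lambda>_. lborel))"
    using N by auto
  define S where "S = {w \<in> space (PiM (insert k I) (\<lambda>_. lborel)). (\<lambda>i\<in>I. w i - w k + c i) \<in> N}"
  have "(\<lambda>w. \<lambda>i\<in>I. w i - w k + c i) \<in> measurable (PiM (insert k I) (\<lambda>_. lborel)) (PiM I (\<lambda>_. lborel))"
    by (intro measurable_restrict borel_measurable_add borel_measurable_diff)
       (auto simp: measurable_component_singleton)
  from measurable_sets[OF this] have S[measurable]: "S \<in> sets (PiM (insert k I) (\<lambda>_. lborel))"
    by (simp add: S_def vimage_def Int_def conj_commute)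
  have "emeasure (PiM (insert k I) (\<lambda>_. lborel)) S
      = (\<integral>\<^sup>+y. (\<integral>\<^sup>+x. indicator S (x(k := y)) \<partial>PiM I (\<lambda>_. lborel)) \<partial>lborel)"
    by (subst product_nn_integral_insert_rev[symmetric]) (use assms in simp_all)
  also have "\<dots> = (\<integral>\<^sup>+y. (\<integral>\<^sup>+x. indicator N (\<lambda>i\<in>I. x i + (c i - y)) \<partial>PiM I (\<lambda>_. lborel)) \<partial>lborel)"
  proof (intro nn_integral_cong)
    fix y :: real and x :: "'i \<Rightarrow> real" assume "x \<in> space (PiM I (\<lambda>_. lborel))"
    moreover have "(\<lambda>i\<in>I. (x(k := y)) i - (x(k := y)) k + c i) = (\<lambda>i\<in>I. x i + (c i - y))"
      using \<open>k \<notin> I\<close> by (auto simp: fun_eq_iff)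
    ultimately show "indicator S (x(k := y)) = (indicator N (\<lambda>i\<in>I. x i + (c i - y)) :: ennreal)"
      by (auto simp: S_def indicator_def space_PiM PiE_def extensional_def)
  qed
  also have "\<dots> = (\<integral>\<^sup>+y. emeasure (PiM I (\<lambda>_. lborel)) N \<partial>(lborel :: real measure))"
  proof (rule nn_integral_cong)
    fix y :: real
    show "(\<integral>\<^sup>+x. indicator N (\<lambda>i\<in>I. x i + (c i - y)) \<partial>PiM I (\<lambda>_. lborel)) = emeasure (PiM I (\<lambda>_. lborel)) N"
      using nn_integral_PiM_lborel_translate[OF \<open>finite I\<close>, of "indicator N" "\<lambda>i. c i - y"] by simp
  qed
  finally show ?thesis
    using N S by (simp add: S_def[symmetric] null_sets_def)
qed

lemma indep_vars_vimage_diff_null: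
  fixes W :: "'i \<Rightarrow> 'a \<Rightarrow> real" and c :: "'i \<Rightarrow> real"
  assumes "prob_space M" "finite I" "k \<notin> I"
    and indep: "prob_space.indep_vars M (\<lambda>_. borel) W (insert k I)"
    and ac: "\<And>i. i \<in> insert k I \<Longrightarrow> absolutely_continuous lborel (distr M lborel (W i))"
    and N: "N \<in> null_sets (PiM I (\<lambda>_. lborel))"
  shows "{\<omega> \<in> space M. (\<lambda>i\<in>I. W i \<omega> - W k \<omega> + c i) \<in> N} \<in> null_sets M"
proof -
  interpret prob_space M by fact
  have W[measurable]: "W i \<in> borel_measurable M" if "i \<in> insert k I" for i
    using indep that unfolding indep_vars_def by blast
  have [measurable]: "(\<lambda>\<omega>. \<lambda>i\<in>insert k I. W i \<omega>) \<in> measurable M (PiM (insert k I) (\<lambda>_. lborel))"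
    using W by (intro measurable_restrict) simp
  let ?S = "{w \<in> space (PiM (insert k I) (\<lambda>_. lborel)). (\<lambda>i\<in>I. w i - w k + c i) \<in> N}"
  have "?S \<in> null_sets (distr M (PiM (insert k I) (\<lambda>_. lborel)) (\<lambda>\<omega>. \<lambda>i\<in>insert k I. W i \<omega>))"
    using indep_vars_absolutely_continuous_PiM_lborel[OF assms(1) _ _ indep ac]
      PiM_lborel_vimage_diff_null[OF assms(2,3) N] \<open>finite I\<close>
    by (auto simp: absolutely_continuous_def)
  moreover have "(\<lambda>\<omega>. \<lambda>i\<in>insert k I. W i \<omega>) -` ?S \<inter> space M
      = {\<omega> \<in> space M. (\<lambda>i\<in>I. W i \<omega> - W k \<omega> + c i) \<in> N}"
    by (auto simp: space_PiM cong: restrict_cong)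
  ultimately show ?thesis
    by (simp add: null_sets_distr_iff)
qed

section \<open>Chi-square variables\<close>

lemma chi2_AE_pos:
  assumes "prob_space M" "distributed M lborel X (\<lambda>x. ennreal (chi2_density r x))"
  shows "AE \<omega> in M. 0 < X \<omega>"
proof -
  have [measurable]: "X \<in> borel_measurable M" "(\<lambda>x. ennreal (chi2_density r x)) \<in> borel_measurable lborel"
    using assms(2) by (auto simp: distributed_def)
  have "emeasure (density lborel (\<lambda>x. ennreal (chi2_density r x))) {..0} = 0"
    by (subst emeasure_density) (auto simp: chi2_density_def indicator_def intro: nn_integral_zero')
  then have "emeasure M (X -` {..0} \<inter> space M) = 0"
    using assms(2) emeasure_distr[of X M lborel "{..0}"] by (simp add: distributed_def)
  then show ?thesis
    by (intro AE_I[where N="X -` {..0} \<inter> space M"]) (auto simp: not_less)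
qed

lemma absolutely_continuous_distr_ln:
  fixes X :: "'a \<Rightarrow> real"
  assumes [measurable]: "X \<in> borel_measurable M" and pos: "AE \<omega> in M. 0 < X \<omega>"
    and ac: "absolutely_continuous lborel (distr M lborel X)"
  shows "absolutely_continuous lborel (distr M lborel (\<lambda>\<omega>. ln (X \<omega>)))"
  unfolding absolutely_continuous_def
proof
  fix B :: "real set" assume B: "B \<in> null_sets lborel"
  then have [measurable]: "B \<in> sets borel" by auto
  have "negligible (exp ` B)"
    using B by (intro negligible_differentiable_image_negligible[OF order_refl])
      (auto simp: negligible_iff_null_sets null_sets_completionI
        intro!: differentiable_at_imp_differentiable_on
          differentiableI[OF has_field_derivative_imp_has_derivative[OF DERIV_exp]])
  moreover have "exp ` B = {x. 0 < x \<and> ln x \<in> B}"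
    by (auto simp: image_iff) (metis exp_ln)
  moreover have "{x. 0 < x \<and> ln x \<in> B} \<in> sets borel"
    by measurable
  ultimately have "{x. 0 < x \<and> ln x \<in> B} \<in> null_sets lborel"
    by (simp add: negligible_iff_null_sets null_sets_completion_iff)
  with ac have "X -` {x. 0 < x \<and> ln x \<in> B} \<inter> space M \<in> null_sets M"
    by (auto simp: absolutely_continuous_def null_sets_distr_iff)
  then have "AE \<omega> in M. \<not> (0 < X \<omega> \<and> ln (X \<omega>) \<in> B)"
    by (rule AE_I') auto
  with pos have "AE \<omega> in M. ln (X \<omega>) \<notin> B"
    by eventually_elim auto
  moreover have "{\<omega> \<in> space M. ln (X \<omega>) \<in> B} \<in> sets M"
    by measurable
  ultimately have "(\<lambda>\<omega>. ln (X \<omega>)) -` B \<inter> space M \<in> null_sets M"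
    by (simp add: AE_iff_null_sets vimage_def Int_def conj_commute)
  then show "B \<in> null_sets (distr M lborel (\<lambda>\<omega>. ln (X \<omega>)))"
    by (simp add: null_sets_distr_iff)
qed

lemma absolutely_continuous_distr_ln_chi2:
  assumes "prob_space M" "distributed M lborel X (\<lambda>x. ennreal (chi2_density r x))"
  shows "absolutely_continuous lborel (distr M lborel (\<lambda>\<omega>. ln (X \<omega>)))"
proof (rule absolutely_continuous_distr_ln)
  show "X \<in> borel_measurable M" "AE \<omega> in M. 0 < X \<omega>"
    using assms chi2_AE_pos by (auto simp: distributed_def)
  show "absolutely_continuous lborel (distr M lborel X)"
    using assms(2) by (auto simp: distributed_def intro: absolutely_continuousI_density)
qed

section \<open>The linear mixed model\<close>

lemma fl_herit:
  assumes "0 \<le> sa" "0 < se"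
  shows "fl lam L l (herit sa se) = (lam l * sa + se) / (lam (L - 1) * sa + se)"
proof -
  have "1 + herit sa se * (x - 1) = (x * sa + se) / (sa + se)" for x
    using assms by (simp add: herit_def field_simps)
  then show ?thesis
    using assms by (simp add: fl_def)
qed

lemma gvec_pos:
  assumes "0 \<le> \<rho>" "\<rho> < 1" "lam (L - 1) < lam l" "0 \<le> lam (L - 1)"
  shows "0 < gvec lam L \<rho> l"
proof -
  define a b where "a = lam l - 1" and "b = lam (L - 1) - 1"
  have "0 \<le> \<rho> * lam (L - 1)" "\<rho> * lam (L - 1) \<le> \<rho> * lam l"
    using assms by (simp_all add: mult_left_mono)
  then have "0 < 1 + \<rho> * a" "0 < 1 + \<rho> * b"
    using \<open>\<rho> < 1\<close> by (simp_all add: a_def b_def algebra_simps)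
  define q where "q t = (1 + t * a) / (1 + t * b)" for t
  define q' where "q' = (a * (1 + \<rho> * b) - (1 + \<rho> * a) * b) / (1 + \<rho> * b)\<^sup>2"
  have "0 < q \<rho>"
    using \<open>0 < 1 + \<rho> * a\<close> \<open>0 < 1 + \<rho> * b\<close> by (simp add: q_def)
  have q_deriv: "(q has_real_derivative q') (at \<rho>)"
    unfolding q_def[abs_def] q'_def using \<open>0 < 1 + \<rho> * b\<close>
    by (auto intro!: derivative_eq_intros simp: power2_eq_square algebra_simps)
  have "((\<lambda>t. ln (q t)) has_real_derivative 1 / q \<rho> * q') (at \<rho>)"
    by (rule DERIV_chain2[OF DERIV_ln_divide[OF \<open>0 < q \<rho>\<close>] q_deriv])
  moreover have "fl lam L l = q"
    by (auto simp: fun_eq_iff fl_def q_def a_def b_def mult.commute)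
  ultimately have "gvec lam L \<rho> l = 1 / q \<rho> * q'"
    unfolding gvec_def by (simp add: DERIV_imp_deriv)
  moreover have "a * (1 + \<rho> * b) - (1 + \<rho> * a) * b = a - b"
    by (simp add: algebra_simps)
  ultimately show ?thesis
    using assms \<open>0 < q \<rho>\<close> \<open>0 < 1 + \<rho> * b\<close> by (simp add: q'_def a_def b_def)
qed

lemma scaled_ratio_eq_fl_mult:
  assumes "0 \<le> sa" "0 < se"
  shows "((lam l * sa + se) * v / r) / ((lam (L - 1) * sa + se) * w / s)
           = fl lam L l (herit sa se) * ((v / r) / (w / s))"
  using assms by (simp add: fl_herit divide_inverse inverse_mult_distrib mult_ac)

lemma fl_pos:
  assumes "0 \<le> sa" "0 < se" "0 \<le> lam l" "0 \<le> lam (L - 1)"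
  shows "0 < fl lam L l (herit sa se)"
  using assms by (simp add: fl_herit add_nonneg_pos)

lemma Hstat_eq_eta:
  assumes "\<And>l. l < L - 1 \<Longrightarrow> x l = fl lam L l \<rho> * u l" "\<And>l. l < L - 1 \<Longrightarrow> fl lam L l \<rho> \<noteq> 0"
  shows "Hstat lam L Mr \<rho> x = eta L Mr u"
  unfolding Hstat_def eta_def using assms by (intro restrict_ext sum.cong) auto

lemma Tstat_eq_phi_add_tau:
  assumes "\<And>l. l < L - 1 \<Longrightarrow> x l = fl lam L l \<rho> * u l"
    and "\<And>l. l < L - 1 \<Longrightarrow> 0 < fl lam L l \<rho>" "\<And>l. l < L - 1 \<Longrightarrow> 0 < u l"
  shows "Tstat L x = phi lam L \<rho> + tau L u"
proof -
  have "ln (x l) = ln (fl lam L l \<rho>) + ln (u l)" if "l < L - 1" for l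
    using assms(1-3)[OF that] by (simp add: ln_mult)
  then show ?thesis
    unfolding Tstat_def phi_def tau_def by (simp add: sum.distrib)
qed

lemma Hstat_scaled_ratio:
  assumes "0 \<le> sa" "0 < se" "\<And>l. l < L - 1 \<Longrightarrow> 0 \<le> lam l" "0 \<le> lam (L - 1)"
  shows "Hstat lam L Mr (herit sa se)
           (\<lambda>l. ((lam l * sa + se) * v l / real (r l)) / ((lam (L - 1) * sa + se) * v (L - 1) / real (r (L - 1))))
         = eta L Mr (\<lambda>l. (v l / real (r l)) / (v (L - 1) / real (r (L - 1))))"
proof (rule Hstat_eq_eta)
  fix l assume "l < L - 1"
  then show "fl lam L l (herit sa se) \<noteq> 0"
    using fl_pos[of sa se lam l L] assms by auto
qed (use assms(1,2) in \<open>rule scaled_ratio_eq_fl_mult\<close>)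

lemma Tstat_scaled_ratio:
  assumes "0 \<le> sa" "0 < se" "\<And>l. l < L - 1 \<Longrightarrow> 0 \<le> lam l" "0 \<le> lam (L - 1)"
    and "\<And>l. l < L \<Longrightarrow> 0 < v l" "\<And>l. l < L \<Longrightarrow> 1 \<le> r l"
  shows "Tstat L (\<lambda>l. ((lam l * sa + se) * v l / real (r l)) / ((lam (L - 1) * sa + se) * v (L - 1) / real (r (L - 1))))
         = phi lam L (herit sa se) + tau L (\<lambda>l. (v l / real (r l)) / (v (L - 1) / real (r (L - 1))))"
proof (rule Tstat_eq_phi_add_tau)
  fix l assume "l < L - 1"
  then show "0 < fl lam L l (herit sa se)"
    using assms(1-4) by (intro fl_pos) auto
  show "0 < (v l / real (r l)) / (v (L - 1) / real (r (L - 1)))"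
    using assms(5,6) \<open>l < L - 1\<close> by (simp add: Suc_le_eq)
qed (use assms(1,2) in \<open>rule scaled_ratio_eq_fl_mult\<close>)

lemma AE_chi2_pos_all:
  fixes V :: "nat \<Rightarrow> 'a \<Rightarrow> real"
  assumes "prob_space M" "\<forall>l<L. distributed M lborel (V l) (\<lambda>x. ennreal (chi2_density (r l) x))"
  shows "AE \<omega> in M. \<forall>l<L. 0 < V l \<omega>"
proof -
  have "AE \<omega> in M. \<forall>l\<in>{..<L}. 0 < V l \<omega>"
    using assms by (intro AE_finite_allI) (auto intro: chi2_AE_pos)
  then show ?thesis by eventually_elim auto
qed

lemma AE_eta_tau_notin:
  fixes L :: nat and V :: "nat \<Rightarrow> 'a \<Rightarrow> real" and r :: "nat \<Rightarrow> nat" and d :: "nat \<Rightarrow> real"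
  defines "U \<equiv> \<lambda>\<omega> l. (V l \<omega> / real (r l)) / (V (L - 1) \<omega> / real (r (L - 1)))"
  assumes "prob_space M" "2 \<le> L" "\<forall>l<L. 1 \<le> r l"
    and indep: "prob_space.indep_vars M (\<lambda>_. borel) V {..<L}"
    and chi2: "\<forall>l<L. distributed M lborel (V l) (\<lambda>x. ennreal (chi2_density (r l) x))"
    and kernel: "\<And>i. i < L - 2 \<Longrightarrow> (\<Sum>l<L - 1. Mr i l * d l) = 0" and "(\<Sum>l<L - 1. d l) \<noteq> 0"
    and A: "A \<in> sets (Hspace L \<Otimes>\<^sub>M borel)" and "\<And>h. countable (Pair h -` A)"
  shows "AE \<omega> in M. (eta L Mr (U \<omega>), tau L (U \<omega>)) \<notin> A"
proof -
  interpret prob_space M by fact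
  define N where "N = {x \<in> space (PiM {..<L - 1} (\<lambda>_. lborel)).
      (\<lambda>i\<in>{..<L - 2}. \<Sum>l<L - 1. Mr i l * x l, \<Sum>l<L - 1. x l) \<in> A}"
  define c where "c l = ln (real (r (L - 1))) - ln (real (r l))" for l
  have "{..<L} = insert (L - 1) {..<L - 1}"
    using \<open>2 \<le> L\<close> by auto
  moreover have "N \<in> null_sets (PiM {..<L - 1} (\<lambda>_. lborel))"
    unfolding N_def using assms by (intro PiM_lborel_linear_vimage_null) (auto simp: Hspace_def)
  ultimately have null: "{\<omega> \<in> space M. (\<lambda>l\<in>{..<L - 1}. ln (V l \<omega>) - ln (V (L - 1) \<omega>) + c l) \<in> N} \<in> null_sets M"
    using indep chi2 \<open>prob_space M\<close>
    by (intro indep_vars_vimage_diff_null[where W="\<lambda>l \<omega>. ln (V l \<omega>)"])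
       (auto intro: indep_vars_compose2[where Y="\<lambda>_. ln"] absolutely_continuous_distr_ln_chi2)
  have ln_U: "ln (U \<omega> l) = ln (V l \<omega>) - ln (V (L - 1) \<omega>) + c l"
    if "\<forall>l<L. 0 < V l \<omega>" "l < L - 1" for \<omega> l
  proof -
    have "0 < V l \<omega>" "0 < V (L - 1) \<omega>" "0 < real (r l)" "0 < real (r (L - 1))"
      using that assms(4) \<open>2 \<le> L\<close> by (auto simp: Suc_le_eq)
    then show ?thesis
      unfolding U_def c_def by (simp only: ln_div) simp
  qed
  have "AE \<omega> in M. (eta L Mr (U \<omega>), tau L (U \<omega>)) \<in> A \<longrightarrow>
      (\<lambda>l\<in>{..<L - 1}. ln (V l \<omega>) - ln (V (L - 1) \<omega>) + c l) \<in> N"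
    using AE_chi2_pos_all[OF \<open>prob_space M\<close> chi2]
  proof eventually_elim
    case (elim \<omega>)
    then have "(\<lambda>l\<in>{..<L - 1}. ln (V l \<omega>) - ln (V (L - 1) \<omega>) + c l) = (\<lambda>l\<in>{..<L - 1}. ln (U \<omega> l))"
      by (simp add: ln_U cong: restrict_cong)
    then show ?case
      by (simp add: N_def eta_def tau_def space_PiM)
  qed
  with AE_not_in[OF null] AE_space show ?thesis
    by eventually_elim auto
qed

lemma borel_measurable_tau:
  "(\<And>l. l < L - 1 \<Longrightarrow> (\<lambda>\<omega>. u \<omega> l) \<in> borel_measurable M) \<Longrightarrow> (\<lambda>\<omega>. tau L (u \<omega>)) \<in> borel_measurable M"
  unfolding tau_def by (intro borel_measurable_sum borel_measurable_ln) auto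

lemma borel_measurable_Tstat:
  "(\<And>l. l < L - 1 \<Longrightarrow> (\<lambda>\<omega>. x \<omega> l) \<in> borel_measurable M) \<Longrightarrow> (\<lambda>\<omega>. Tstat L (x \<omega>)) \<in> borel_measurable M"
  unfolding Tstat_def by (intro borel_measurable_sum borel_measurable_ln) auto

lemma measurable_eta:
  "(\<And>l. l < L - 1 \<Longrightarrow> (\<lambda>\<omega>. u \<omega> l) \<in> borel_measurable M) \<Longrightarrow> (\<lambda>\<omega>. eta L Mr (u \<omega>)) \<in> measurable M (Hspace L)"
  unfolding eta_def Hspace_def
  by (intro measurable_restrict borel_measurable_sum borel_measurable_times borel_measurable_const
      borel_measurable_ln) auto

lemma measurable_ratio_statistics:
  fixes V :: "nat \<Rightarrow> 'a \<Rightarrow> real" and c :: "nat \<Rightarrow> real"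
  assumes V: "\<And>l. l < L \<Longrightarrow> V l \<in> borel_measurable M"
  shows "(\<lambda>\<omega>. tau L (\<lambda>l. (V l \<omega> / real (r l)) / (V (L - 1) \<omega> / real (r (L - 1))))) \<in> borel_measurable M"
    and "(\<lambda>\<omega>. eta L Mr (\<lambda>l. (V l \<omega> / real (r l)) / (V (L - 1) \<omega> / real (r (L - 1)))))
           \<in> measurable M (Hspace L)"
    and "(\<lambda>\<omega>. Tstat L (\<lambda>l. (c l * V l \<omega> / real (r l)) / (c (L - 1) * V (L - 1) \<omega> / real (r (L - 1)))))
           \<in> borel_measurable M"
  by (intro borel_measurable_tau measurable_eta borel_measurable_Tstat borel_measurable_divide
      borel_measurable_times borel_measurable_const V; simp)+

lemma cond_distr_kernel_tau_eta_AE_atomless: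
  fixes L :: nat and V :: "nat \<Rightarrow> 'a \<Rightarrow> real" and r :: "nat \<Rightarrow> nat"
  defines "U \<equiv> \<lambda>\<omega> l. (V l \<omega> / real (r l)) / (V (L - 1) \<omega> / real (r (L - 1)))"
  assumes "prob_space M" "2 \<le> L"
    and "\<And>l. l < L - 1 \<Longrightarrow> lam (L - 1) < lam l" "0 \<le> lam (L - 1)" "\<forall>l<L. 1 \<le> r l"
    and "prob_space.indep_vars M (\<lambda>_. borel) V {..<L}"
    and chi2: "\<forall>l<L. distributed M lborel (V l) (\<lambda>x. ennreal (chi2_density (r l) x))"
    and "0 \<le> \<rho>" "\<rho> < 1" and "rows_basis_orth_compl L Mr (gvec lam L \<rho>)"
    and kernel: "cond_distr_kernel M (\<lambda>\<omega>. tau L (U \<omega>)) (\<lambda>\<omega>. eta L Mr (U \<omega>)) (Hspace L) K"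
  shows "AE h in distr M (Hspace L) (\<lambda>\<omega>. eta L Mr (U \<omega>)). \<forall>v. measure (K h) {v} = 0"
proof (rule cond_distr_kernel_AE_atomless[OF \<open>prob_space M\<close> kernel])
  have V_meas: "V l \<in> borel_measurable M" if "l < L" for l
    using chi2 that by (simp add: distributed_def)
  show "(\<lambda>\<omega>. tau L (U \<omega>)) \<in> borel_measurable M" "(\<lambda>\<omega>. eta L Mr (U \<omega>)) \<in> measurable M (Hspace L)"
    using measurable_ratio_statistics[where V=V and L=L, OF V_meas] unfolding U_def by blast+
  have "0 < (\<Sum>l<L - 1. gvec lam L \<rho> l)"
    using assms(3-5,9,10) by (intro sum_pos gvec_pos) (auto simp: lessThan_empty_iff)
  then show "AE \<omega> in M. (eta L Mr (U \<omega>), tau L (U \<omega>)) \<notin> A"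
    if "A \<in> sets (Hspace L \<Otimes>\<^sub>M borel)" "\<And>h. countable (Pair h -` A)" for A
    unfolding U_def using assms(2,3,6-8,11) that
    by (intro AE_eta_tau_notin[where d="gvec lam L \<rho>"]) (auto simp: rows_basis_orth_compl_def)
qed

theorem theorem1:
  fixes \<Omega> :: "'a measure"
    and L :: nat and lam :: "nat \<Rightarrow> real" and r :: "nat \<Rightarrow> nat"
    and V :: "nat \<Rightarrow> 'a \<Rightarrow> real"
    and sa se :: real
    and Mr :: "nat \<Rightarrow> nat \<Rightarrow> real"
    and K :: "(nat \<Rightarrow> real) \<Rightarrow> real measure"
    and \<alpha> :: real and C :: "(nat \<Rightarrow> real) set"
  defines "\<rho> \<equiv> herit sa se"
    and "U \<equiv> \<lambda>\<omega> l. (V l \<omega> / real (r l)) / (V (L - 1) \<omega> / real (r (L - 1)))"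
    and "X \<equiv> \<lambda>\<omega> l. (((lam l * sa + se) * V l \<omega>) / real (r l))
                    / (((lam (L - 1) * sa + se) * V (L - 1) \<omega>) / real (r (L - 1)))"
  assumes "prob_space \<Omega>"
    and "L \<ge> 3"
    and "\<forall>i j. i < j \<and> j < L \<longrightarrow> lam j < lam i"
    and "lam (L - 1) \<ge> 0"
    and "\<forall>l<L. r l \<ge> 1"
    and "prob_space.indep_vars \<Omega> (\<lambda>_. borel) V {..<L}"
    and "\<forall>l<L. distributed \<Omega> lborel (V l) (\<lambda>x. ennreal (chi2_density (r l) x))"
    and "sa \<ge> 0" and "se > 0"
    and "rows_basis_orth_compl L Mr (gvec lam L \<rho>)"
    and "cond_distr_kernel \<Omega> (\<lambda>\<omega>. tau L (U \<omega>)) (\<lambda>\<omega>. eta L Mr (U \<omega>)) (Hspace L) K"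
    and "0 < \<alpha>" and "\<alpha> < 1"
    and "C \<in> sets (Hspace L)"
  shows "measure \<Omega> {\<omega>\<in>space \<Omega>. plaus lam L Mr K \<rho> (X \<omega>) \<le> \<alpha> \<and> Hstat lam L Mr \<rho> (X \<omega>) \<in> C}
           = \<alpha> * measure \<Omega> {\<omega>\<in>space \<Omega>. Hstat lam L Mr \<rho> (X \<omega>) \<in> C}"
proof -
  note prob = assms(4) and chi2 = assms(10) and kernel = assms(14)
  have lam: "lam (L - 1) < lam l" "0 \<le> lam l" if "l < L - 1" for l
    using assms(6,7) that by force+
  have V_meas: "V l \<in> borel_measurable \<Omega>" if "l < L" for l
    using chi2 that by (simp add: distributed_def)
  have statistics_measurable: "(\<lambda>\<omega>. tau L (U \<omega>)) \<in> borel_measurable \<Omega>"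
    "(\<lambda>\<omega>. eta L Mr (U \<omega>)) \<in> measurable \<Omega> (Hspace L)" "(\<lambda>\<omega>. Tstat L (X \<omega>)) \<in> borel_measurable \<Omega>"
    using measurable_ratio_statistics(1,2)[where V=V and L=L, OF V_meas]
      measurable_ratio_statistics(3)[where V=V and L=L and c="\<lambda>l. lam l * sa + se", OF V_meas]
    unfolding U_def X_def by blast+
  have H_eq: "Hstat lam L Mr \<rho> (X \<omega>) = eta L Mr (U \<omega>)" for \<omega>
    unfolding X_def U_def \<rho>_def using assms(7,11,12) lam by (intro Hstat_scaled_ratio) auto
  have "AE \<omega> in \<Omega>. Tstat L (X \<omega>) - phi lam L \<rho> = tau L (U \<omega>)"
    using AE_chi2_pos_all[OF prob chi2]
  proof eventually_elim
    case (elim \<omega>)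
    then show ?case
      unfolding X_def U_def \<rho>_def using assms(7,8,11,12) lam by (subst Tstat_scaled_ratio) auto
  qed
  moreover have "AE h in distr \<Omega> (Hspace L) (\<lambda>\<omega>. eta L Mr (U \<omega>)). \<forall>v. measure (K h) {v} = 0"
    unfolding U_def using assms lam
    by (intro cond_distr_kernel_tau_eta_AE_atomless) (auto simp: \<rho>_def herit_def divide_simps)
  ultimately show ?thesis
    using cond_distr_kernel_plausibility_valid[OF prob kernel statistics_measurable(1,2) _ _ _ assms(17,15,16)]
      statistics_measurable(3)
    by (simp add: plaus_def H_eq Let_def borel_measurable_diff)
qed

end
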